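(* Let $\psi:(0,1]\to(0,\infty)$ with $\psi(1)=1$, $\lim_{r\to0+}\psi(r)=0$ and $I_\psi\subset(0,1)$, and let $f\in C^\psi(\mathbb{R}^d)$. There exists a constant $C=C(\psi)$ such that $$[f]_{C^\psi}\le C\big(\|f\|_{C^0}+[[f]]_{C^\psi}\big).$$
   Context: $g:(0,1]\to(0,\infty)$ is almost increasing if $c\,g(r)\le g(R)$ for some $c\in(0,1]$ and all $0<r\le R\le1$, almost decreasing if $g(R)\le Cg(r)$ for some $C\ge1$ and all $0<r\le R\le1$. $M_\psi=\inf\{\alpha: \psi(r)/r^\alpha\text{ almost decreasing on }(0,1]\}$, $m_\psi=\sup\{\alpha: \psi(r)/r^\alpha\text{ almost increasing on }(0,1]\}$, $I_\psi=[m_\psi,M_\psi]$. $\|f\|_{C^0}=\sup|f|$. $[f]_{C^\psi}=\sup_{x\in\mathbb{R}^d}\sup_{0<|h|\le1}\frac{|f(x+h)-f(x)|}{\psi(|h|)}$ and $[[f]]_{C^\psi}=\sup_{x\in\mathbb{R}^d}\sup_{0<|h|\le1}\frac{|f(x+h)-2f(x)+f(x-h)|}{\psi(|h|)}$. When $m_\psi\in(0,1]$, $C^\psi(\mathbb{R}^d)$ is the space of bounded continuous $f$ with $[f]_{C^\psi}<\infty$. *)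

theory Defs
  imports "HOL-Analysis.Analysis"
begin

definition almost_increasing :: "(real \<Rightarrow> real) \<Rightarrow> bool" where
  "almost_increasing g \<longleftrightarrow>
     (\<exists>c. 0 < c \<and> c \<le> 1 \<and> (\<forall>r R. 0 < r \<and> r \<le> R \<and> R \<le> 1 \<longrightarrow> c * g r \<le> g R))"

definition almost_decreasing :: "(real \<Rightarrow> real) \<Rightarrow> bool" where
  "almost_decreasing g \<longleftrightarrow>
     (\<exists>C. 1 \<le> C \<and> (\<forall>r R. 0 < r \<and> r \<le> R \<and> R \<le> 1 \<longrightarrow> g R \<le> C * g r))"

text \<open>Upper and lower indices, valued in the extended reals (inf of empty set = +infinity).\<close>
definition M_idx :: "(real \<Rightarrow> real) \<Rightarrow> ereal" where
  "M_idx \<psi> = Inf {ereal \<alpha> | \<alpha>. almost_decreasing (\<lambda>r. \<psi> r / r powr \<alpha>)}"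

definition m_idx :: "(real \<Rightarrow> real) \<Rightarrow> ereal" where
  "m_idx \<psi> = Sup {ereal \<alpha> | \<alpha>. almost_increasing (\<lambda>r. \<psi> r / r powr \<alpha>)}"

definition I_idx :: "(real \<Rightarrow> real) \<Rightarrow> ereal set" where
  "I_idx \<psi> = {m_idx \<psi> .. M_idx \<psi>}"

definition C0_norm :: "('a \<Rightarrow> real) \<Rightarrow> ereal" where
  "C0_norm f = (SUP x. ereal \<bar>f x\<bar>)"

definition holder_semi :: "(real \<Rightarrow> real) \<Rightarrow> ('a::real_normed_vector \<Rightarrow> real) \<Rightarrow> ereal" where
  "holder_semi \<psi> f = (SUP x. SUP h \<in> {h. 0 < norm h \<and> norm h \<le> 1}.
      ereal (\<bar>f (x + h) - f x\<bar> / \<psi> (norm h)))"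

definition holder_semi2 :: "(real \<Rightarrow> real) \<Rightarrow> ('a::real_normed_vector \<Rightarrow> real) \<Rightarrow> ereal" where
  "holder_semi2 \<psi> f = (SUP x. SUP h \<in> {h. 0 < norm h \<and> norm h \<le> 1}.
      ereal (\<bar>f (x + h) - 2 * f x + f (x - h)\<bar> / \<psi> (norm h)))"

definition C_psi :: "(real \<Rightarrow> real) \<Rightarrow> ('a::euclidean_space \<Rightarrow> real) set" where
  "C_psi \<psi> = {f. bounded (range f) \<and> continuous_on UNIV f \<and> holder_semi \<psi> f < \<infinity>}"

end

theory Submission
  imports Defs
begin

text \<open>Telescoping the second differences along the dyadic points x + 2^j h gives
  |f(x+h) - f(x)| \<le> 2^-n |f(x + 2^n h) - f(x)| + [[f]] \<Sum>_{j<n} 2^(-j-1) \<psi>(2^j |h|).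
  Stopping at the largest n with 2^n |h| \<le> 1, the first term is at most 4 \<parallel>f\<parallel> |h|.
  Since M_\<psi> < 1, \<psi>(r)/r^\<beta> is almost decreasing for some \<beta> < 1; this gives
  |h| \<le> K \<psi>(|h|) and \<psi>(2^j |h|) \<le> K 2^(j\<beta>) \<psi>(|h|), so the sum is dominated by a
  geometric series of ratio 2^(\<beta>-1).\<close>

lemma half_two_powr_lt_1: "(\<beta>::real) < 1 \<Longrightarrow> 2 powr \<beta> / 2 < 1"
  using powr_less_mono[of \<beta> 1 2] by simp

lemma almost_increasing_exponent_le_almost_decreasing_exponent:
  fixes \<psi> :: "real \<Rightarrow> real"
  assumes "0 < \<psi> 1"
    and "almost_increasing (\<lambda>r. \<psi> r / r powr a)"
    and "almost_decreasing (\<lambda>r. \<psi> r / r powr b)"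
  shows "a \<le> b"
proof (rule ccontr)
  assume "\<not> a \<le> b"
  obtain c where c: "0 < c" "c \<le> 1"
    "\<And>r R. 0 < r \<Longrightarrow> r \<le> R \<Longrightarrow> R \<le> 1 \<Longrightarrow> c * (\<psi> r / r powr a) \<le> \<psi> R / R powr a"
    using assms(2) unfolding almost_increasing_def by blast
  obtain C where C: "1 \<le> C"
    "\<And>r R. 0 < r \<Longrightarrow> r \<le> R \<Longrightarrow> R \<le> 1 \<Longrightarrow> \<psi> R / R powr b \<le> C * (\<psi> r / r powr b)"
    using assms(3) unfolding almost_decreasing_def by blast
  \<comment> \<open>At \<open>r\<^sup>a\<^sup>-\<^sup>b = c / (2 C)\<close> the two almost-monotonicity bounds between \<open>r\<close>
    and \<open>1\<close> contradict each other.\<close>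
  define r where "r = (c / (2 * C)) powr (1 / (a - b))"
  have "0 < c / (2 * C)" "c / (2 * C) \<le> 1" using c C by (auto simp: field_simps)
  then have r: "0 < r" "r \<le> 1" "r powr (a - b) = c / (2 * C)"
    using \<open>\<not> a \<le> b\<close> c(1) C(1) unfolding r_def by (auto intro: powr_le1 simp: powr_powr)
  have "c * (\<psi> 1 * r powr b) \<le> c * (C * \<psi> r)"
    using C(2)[of r 1] r c(1) by (intro mult_left_mono) (simp_all add: field_simps)
  also have "\<dots> = C * (c * \<psi> r)" by simp
  also have "\<dots> \<le> C * (\<psi> 1 * r powr a)"
    using c(3)[of r 1] r C(1) by (intro mult_left_mono) (simp_all add: field_simps)
  also have "r powr a = r powr b * r powr (a - b)" by (simp flip: powr_add)
  also have "C * (\<psi> 1 * (r powr b * r powr (a - b))) = c * (\<psi> 1 * r powr b) / 2"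
    using r(3) C(1) by simp
  finally have "c * (\<psi> 1 * r powr b) \<le> c * (\<psi> 1 * r powr b) / 2" .
  moreover have "0 < c * (\<psi> 1 * r powr b)" using c(1) assms(1) r(1) by simp
  ultimately show False by simp
qed

lemma exists_almost_decreasing_exponent_lt_1:
  fixes \<psi> :: "real \<Rightarrow> real"
  assumes "0 < \<psi> 1" and "I_idx \<psi> \<subseteq> {0<..<1}"
  obtains \<beta> where "\<beta> < 1" "almost_decreasing (\<lambda>r. \<psi> r / r powr \<beta>)"
proof (cases "m_idx \<psi> \<le> M_idx \<psi>")
  case True
  then have "M_idx \<psi> < 1" using assms(2) unfolding I_idx_def by auto
  then obtain x where "x \<in> {ereal \<alpha> | \<alpha>. almost_decreasing (\<lambda>r. \<psi> r / r powr \<alpha>)}" "x < 1"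
    unfolding M_idx_def Inf_less_iff by blast
  with that show thesis by auto
next
  case False
  \<comment> \<open>Then \<open>I_idx \<psi>\<close> is empty and the hypothesis says nothing; this case is impossible.\<close>
  then have "M_idx \<psi> < m_idx \<psi>" by simp
  then obtain x where x: "x \<in> {ereal \<alpha> | \<alpha>. almost_increasing (\<lambda>r. \<psi> r / r powr \<alpha>)}" "M_idx \<psi> < x"
    unfolding m_idx_def less_Sup_iff by auto
  then obtain y where "y \<in> {ereal \<alpha> | \<alpha>. almost_decreasing (\<lambda>r. \<psi> r / r powr \<alpha>)}" "y < x"
    unfolding M_idx_def Inf_less_iff by blast
  with x almost_increasing_exponent_le_almost_decreasing_exponent[of \<psi>, OF assms(1)] show thesis
    by force
qed

lemma abs_diff_le_half_double_diff:
  fixes a b c :: real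
  shows "\<bar>b - a\<bar> \<le> \<bar>c - a\<bar> / 2 + \<bar>c - 2 * b + a\<bar> / 2"
  by (auto simp: abs_if field_simps)

lemma dyadic_increment_bound:
  fixes f :: "'a::real_normed_vector \<Rightarrow> real"
  assumes second_diff: "\<And>x h. 0 < norm h \<Longrightarrow> norm h \<le> 1 \<Longrightarrow>
      \<bar>f (x + h) - 2 * f x + f (x - h)\<bar> \<le> S * \<psi> (norm h)"
    and h: "0 < norm h" "2 ^ n * norm h \<le> 1"
  shows "\<bar>f (x + h) - f x\<bar> \<le>
    \<bar>f (x + 2 ^ n *\<^sub>R h) - f x\<bar> / 2 ^ n + S * (\<Sum>j<n. \<psi> (2 ^ j * norm h) / 2 ^ (j + 1))"
  using h(2)
proof (induction n)
  case 0
  then show ?case by simp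
next
  case (Suc n)
  let ?a = "f x" and ?b = "f (x + 2 ^ n *\<^sub>R h)" and ?c = "f (x + 2 ^ Suc n *\<^sub>R h)"
  have "2 ^ n * norm h \<le> 2 ^ Suc n * norm h" using h(1) by simp
  with Suc.prems have n_le: "2 ^ n * norm h \<le> 1" by linarith
  then have IH: "\<bar>f (x + h) - ?a\<bar> \<le>
      \<bar>?b - ?a\<bar> / 2 ^ n + S * (\<Sum>j<n. \<psi> (2 ^ j * norm h) / 2 ^ (j + 1))"
    using Suc.IH by linarith
  have "2 ^ n *\<^sub>R h + 2 ^ n *\<^sub>R h = (2 ^ Suc n :: real) *\<^sub>R h"
    by (simp flip: scaleR_add_left)
  then have "\<bar>?c - 2 * ?b + ?a\<bar> \<le> S * \<psi> (2 ^ n * norm h)"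
    using second_diff[of "2 ^ n *\<^sub>R h" "x + 2 ^ n *\<^sub>R h"] h(1) n_le by (simp add: add.assoc)
  then have "\<bar>?b - ?a\<bar> / 2 ^ n \<le> \<bar>?c - ?a\<bar> / 2 ^ Suc n + S * \<psi> (2 ^ n * norm h) / 2 ^ (n + 1)"
    using abs_diff_le_half_double_diff[of ?b ?a ?c] by (simp add: field_simps)
  with IH show ?case by (simp add: algebra_simps)
qed

lemma almost_decreasing_powr_growth:
  fixes \<psi> :: "real \<Rightarrow> real" and \<beta> K t :: real
  assumes K: "\<And>r R. 0 < r \<Longrightarrow> r \<le> R \<Longrightarrow> R \<le> 1 \<Longrightarrow> \<psi> R / R powr \<beta> \<le> K * (\<psi> r / r powr \<beta>)"
    and t: "0 < t" "t \<le> s" "s \<le> 1"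
  shows "\<psi> s \<le> K * \<psi> t * (s / t) powr \<beta>"
proof -
  have "\<psi> s / s powr \<beta> \<le> K * (\<psi> t / t powr \<beta>)" using K t by blast
  then show ?thesis using t by (simp add: powr_divide field_simps)
qed

lemma le_const_times_psi:
  fixes \<psi> :: "real \<Rightarrow> real" and \<beta> K t :: real
  assumes K: "\<And>r R. 0 < r \<Longrightarrow> r \<le> R \<Longrightarrow> R \<le> 1 \<Longrightarrow> \<psi> R / R powr \<beta> \<le> K * (\<psi> r / r powr \<beta>)"
    and one: "\<psi> 1 = 1" and "\<beta> \<le> 1" and t: "0 < t" "t \<le> 1"
  shows "t \<le> K * \<psi> t"
proof -
  have "t = t powr 1" using t by simp
  also have "\<dots> \<le> t powr \<beta>" using \<open>\<beta> \<le> 1\<close> t by (intro powr_mono') auto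
  also have "\<dots> \<le> K * \<psi> t"
    using almost_decreasing_powr_growth[OF K t] one t by (simp add: powr_divide field_simps)
  finally show ?thesis .
qed

lemma dyadic_psi_sum_bound:
  fixes \<psi> :: "real \<Rightarrow> real" and \<beta> K t :: real
  assumes K: "\<And>r R. 0 < r \<Longrightarrow> r \<le> R \<Longrightarrow> R \<le> 1 \<Longrightarrow> \<psi> R / R powr \<beta> \<le> K * (\<psi> r / r powr \<beta>)"
    and "\<beta> < 1" and t: "0 < t" "2 ^ n * t \<le> 1" and "0 < \<psi> t"
  shows "(\<Sum>j<n. \<psi> (2 ^ j * t) / 2 ^ (j + 1)) \<le> K * \<psi> t / (2 * (1 - 2 powr \<beta> / 2))"
proof -
  define q where "q = 2 powr \<beta> / 2"
  have q: "0 < q" "q < 1" using half_two_powr_lt_1[OF \<open>\<beta> < 1\<close>] unfolding q_def by auto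
  have "t \<le> 2 ^ n * t" using t by simp
  with t have "t \<le> 1" by linarith
  then have "\<psi> t / t powr \<beta> \<le> K * (\<psi> t / t powr \<beta>)" using K t(1) by blast
  then have "1 \<le> K" using \<open>0 < \<psi> t\<close> t(1) by (simp add: field_simps)
  have term_bound: "\<psi> (2 ^ j * t) / 2 ^ (j + 1) \<le> K * \<psi> t / 2 * q ^ j" if "j < n" for j
  proof -
    have "2 ^ j * t \<le> 2 ^ n * t" using t that by (intro mult_right_mono power_increasing) auto
    with t have "2 ^ j * t \<le> 1" by linarith
    then have "\<psi> (2 ^ j * t) \<le> K * \<psi> t * (2 ^ j) powr \<beta>"
      using almost_decreasing_powr_growth[OF K, of t "2 ^ j * t"] t by simp
    also have "(2 ^ j) powr \<beta> = (2 powr \<beta>) ^ j"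
      by (simp add: powr_power powr_powr mult.commute flip: powr_realpow)
    finally show ?thesis unfolding q_def by (simp add: power_divide field_simps)
  qed
  have "(\<Sum>j<n. \<psi> (2 ^ j * t) / 2 ^ (j + 1)) \<le> K * \<psi> t / 2 * (\<Sum>j<n. q ^ j)"
    unfolding sum_distrib_left using term_bound by (intro sum_mono) auto
  also have "(\<Sum>j<n. q ^ j) \<le> 1 / (1 - q)"
    using q by (simp add: sum_gp_strict divide_right_mono)
  then have "K * \<psi> t / 2 * (\<Sum>j<n. q ^ j) \<le> K * \<psi> t / 2 * (1 / (1 - q))"
    using \<open>1 \<le> K\<close> \<open>0 < \<psi> t\<close> by (intro mult_left_mono) auto
  finally show ?thesis unfolding q_def by simp
qed

lemma exists_dyadic_scale:
  fixes t :: real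
  assumes "0 < t" "t \<le> 1"
  obtains n :: nat where "2 ^ n * t \<le> 1" "1 < 2 ^ Suc n * t"
proof -
  obtain m :: nat where "1 / t < 2 ^ m" using real_arch_pow[of 2 "1 / t"] by auto
  define m0 where "m0 = (LEAST m. 1 / t < (2::real) ^ m)"
  have m0: "1 / t < 2 ^ m0" unfolding m0_def using \<open>1 / t < 2 ^ m\<close> by (rule LeastI)
  have "1 \<le> 1 / t" using assms by simp
  with m0 have "m0 \<noteq> 0" by (intro notI) simp
  then obtain n where n: "m0 = Suc n" using not0_implies_Suc by blast
  then have "\<not> 1 / t < (2::real) ^ n" unfolding m0_def by (metis Suc_n_not_le_n Least_le)
  with m0 n assms show thesis by (intro that) (auto simp: field_simps)
qed

lemma abs_increment_bound:
  fixes f :: "'a::real_normed_vector \<Rightarrow> real" and \<psi> :: "real \<Rightarrow> real" and \<beta> K D S :: real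
  assumes pos: "\<And>r. 0 < r \<Longrightarrow> r \<le> 1 \<Longrightarrow> 0 < \<psi> r" and one: "\<psi> 1 = 1" and "\<beta> < 1"
    and K: "\<And>r R. 0 < r \<Longrightarrow> r \<le> R \<Longrightarrow> R \<le> 1 \<Longrightarrow> \<psi> R / R powr \<beta> \<le> K * (\<psi> r / r powr \<beta>)"
    and D: "\<And>y. \<bar>f y\<bar> \<le> D"
    and second_diff: "\<And>x h. 0 < norm h \<Longrightarrow> norm h \<le> 1 \<Longrightarrow>
      \<bar>f (x + h) - 2 * f x + f (x - h)\<bar> \<le> S * \<psi> (norm h)"
    and "0 \<le> S" and h: "0 < norm h" "norm h \<le> 1"
  shows "\<bar>f (x + h) - f x\<bar> \<le> K * (4 + 1 / (1 - 2 powr \<beta> / 2)) * (D + S) * \<psi> (norm h)"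
proof -
  define t where "t = norm h"
  define a where "a = 1 / (1 - 2 powr \<beta> / 2)"
  have t: "0 < t" "t \<le> 1" using h t_def by auto
  obtain n where n: "2 ^ n * t \<le> 1" "1 < 2 ^ Suc n * t" using exists_dyadic_scale[OF t] .
  have "0 < a" using half_two_powr_lt_1[OF \<open>\<beta> < 1\<close>] unfolding a_def by simp
  have "0 \<le> D" using D[of x] by linarith
  have "t \<le> K * \<psi> t" using le_const_times_psi[OF K one _ t] \<open>\<beta> < 1\<close> by simp
  have far: "\<bar>f (x + 2 ^ n *\<^sub>R h) - f x\<bar> / 2 ^ n \<le> 4 * D * (K * \<psi> t)"
  proof -
    have "\<bar>f (x + 2 ^ n *\<^sub>R h) - f x\<bar> \<le> 2 * D" using D[of "x + 2 ^ n *\<^sub>R h"] D[of x] by linarith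
    also have "\<dots> \<le> 2 * D * (2 ^ Suc n * t)"
      using mult_left_mono[of 1 "2 ^ Suc n * t" "2 * D"] n(2) \<open>0 \<le> D\<close> by simp
    finally have "\<bar>f (x + 2 ^ n *\<^sub>R h) - f x\<bar> / 2 ^ n \<le> 4 * D * t"
      by (simp add: field_simps)
    also have "\<dots> \<le> 4 * D * (K * \<psi> t)" using \<open>0 \<le> D\<close> \<open>t \<le> K * \<psi> t\<close> by (intro mult_left_mono) auto
    finally show ?thesis .
  qed
  have near: "(\<Sum>j<n. \<psi> (2 ^ j * t) / 2 ^ (j + 1)) \<le> K * \<psi> t * a / 2"
    using dyadic_psi_sum_bound[OF K \<open>\<beta> < 1\<close> t(1) n(1)] pos t unfolding a_def by simp
  have "\<bar>f (x + h) - f x\<bar> \<le> 4 * D * (K * \<psi> t) + S * (K * \<psi> t * a / 2)"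
    using dyadic_increment_bound[OF second_diff h(1), of n x] n(1) far
      mult_left_mono[OF near \<open>0 \<le> S\<close>] unfolding t_def by linarith
  also have "\<dots> \<le> (4 + a) * (D + S) * (K * \<psi> t)"
  proof -
    have "0 < K * \<psi> t" using t \<open>t \<le> K * \<psi> t\<close> by linarith
    then have "0 \<le> S * (K * \<psi> t)" "0 \<le> a * D * (K * \<psi> t)" "0 \<le> a * S * (K * \<psi> t)"
      using \<open>0 \<le> D\<close> \<open>0 \<le> S\<close> \<open>0 < a\<close> by simp_all
    then show ?thesis by (simp add: algebra_simps)
  qed
  finally show ?thesis unfolding a_def t_def by (simp add: mult_ac)
qed

lemma abs_le_C0_norm: "ereal \<bar>f y\<bar> \<le> C0_norm f"
  unfolding C0_norm_def by (rule SUP_upper) simp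

lemma second_difference_le_holder_semi2:
  fixes f :: "'a::real_normed_vector \<Rightarrow> real"
  assumes "0 < norm h" "norm h \<le> 1"
  shows "ereal (\<bar>f (x + h) - 2 * f x + f (x - h)\<bar> / \<psi> (norm h)) \<le> holder_semi2 \<psi> f"
  unfolding holder_semi2_def using assms
  by (intro SUP_upper2[of x] SUP_upper2[of h]) auto

lemma holder_semi2_nonneg:
  fixes f :: "'a::euclidean_space \<Rightarrow> real"
  assumes "0 \<le> \<psi> 1"
  shows "0 \<le> holder_semi2 \<psi> f"
proof -
  obtain b :: 'a where "norm b = 1" using norm_Basis SOME_Basis by blast
  then have "0 \<le> ereal (\<bar>f (0 + b) - 2 * f 0 + f (0 - b)\<bar> / \<psi> (norm b))"
    using assms by simp
  also have "\<dots> \<le> holder_semi2 \<psi> f"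
    using \<open>norm b = 1\<close> by (intro second_difference_le_holder_semi2) auto
  finally show ?thesis .
qed

lemma holder_semi_le:
  fixes f :: "'a::real_normed_vector \<Rightarrow> real"
  assumes "\<And>r. 0 < r \<Longrightarrow> r \<le> 1 \<Longrightarrow> 0 < \<psi> r"
    and "\<And>x h. 0 < norm h \<Longrightarrow> norm h \<le> 1 \<Longrightarrow> \<bar>f (x + h) - f x\<bar> \<le> B * \<psi> (norm h)"
  shows "holder_semi \<psi> f \<le> ereal B"
  unfolding holder_semi_def
proof (intro SUP_least)
  fix x h :: 'a assume "h \<in> {h. 0 < norm h \<and> norm h \<le> 1}"
  with assms show "ereal (\<bar>f (x + h) - f x\<bar> / \<psi> (norm h)) \<le> ereal B"
    by (simp add: divide_le_eq)
qed

lemma holder_semi_le_C0_norm_plus_holder_semi2: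
  fixes f :: "'a::euclidean_space \<Rightarrow> real" and \<psi> :: "real \<Rightarrow> real" and C :: real
  assumes pos: "\<And>r. 0 < r \<Longrightarrow> r \<le> 1 \<Longrightarrow> 0 < \<psi> r" and "0 < C"
    and increment: "\<And>D S x h. (\<And>y. \<bar>f y\<bar> \<le> D) \<Longrightarrow>
      (\<And>x h. 0 < norm h \<Longrightarrow> norm h \<le> 1 \<Longrightarrow> \<bar>f (x + h) - 2 * f x + f (x - h)\<bar> \<le> S * \<psi> (norm h)) \<Longrightarrow>
      0 \<le> S \<Longrightarrow> 0 < norm h \<Longrightarrow> norm h \<le> 1 \<Longrightarrow> \<bar>f (x + h) - f x\<bar> \<le> C * (D + S) * \<psi> (norm h)"
  shows "holder_semi \<psi> f \<le> ereal C * (C0_norm f + holder_semi2 \<psi> f)"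
proof -
  have "0 \<le> C0_norm f" using abs_le_C0_norm[of f 0] by (meson abs_ge_zero ereal_less_eq(5) order_trans)
  moreover have "0 \<le> holder_semi2 \<psi> f" using holder_semi2_nonneg[of \<psi> f] pos[of 1] by simp
  ultimately consider "C0_norm f + holder_semi2 \<psi> f = \<infinity>"
    | D S where "C0_norm f = ereal D" "holder_semi2 \<psi> f = ereal S" "0 \<le> S"
    by (cases "C0_norm f"; cases "holder_semi2 \<psi> f") auto
  then show ?thesis
  proof cases
    case 1
    show ?thesis unfolding 1 using \<open>0 < C\<close> by simp
  next
    case (2 D S)
    have D: "\<bar>f y\<bar> \<le> D" for y using abs_le_C0_norm[of f y] 2 by simp
    have S: "\<bar>f (x + h) - 2 * f x + f (x - h)\<bar> \<le> S * \<psi> (norm h)"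
      if "0 < norm h" "norm h \<le> 1" for x h
      using second_difference_le_holder_semi2[OF that, of f x \<psi>] 2 pos[of "norm h"] that
      by (simp add: divide_le_eq)
    have "holder_semi \<psi> f \<le> ereal (C * (D + S))"
      using increment[OF D S \<open>0 \<le> S\<close>] by (intro holder_semi_le[OF pos]) simp
    also have "\<dots> = ereal C * (C0_norm f + holder_semi2 \<psi> f)" unfolding 2(1,2) by simp
    finally show ?thesis .
  qed
qed

theorem lemma2p2:
  fixes \<psi> :: "real \<Rightarrow> real"
  assumes pos: "\<forall>r. 0 < r \<and> r \<le> 1 \<longrightarrow> 0 < \<psi> r"
    and one: "\<psi> 1 = 1"
    and lim: "(\<psi> \<longlongrightarrow> 0) (at_right 0)"
    and idx: "I_idx \<psi> \<subseteq> {0<..<1}"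
  shows "\<exists>C::real. 0 < C \<and> (\<forall>f::'a::euclidean_space \<Rightarrow> real. f \<in> C_psi \<psi> \<longrightarrow>
           holder_semi \<psi> f \<le> ereal C * (C0_norm f + holder_semi2 \<psi> f))"
proof -
  have pos: "\<And>r. 0 < r \<Longrightarrow> r \<le> 1 \<Longrightarrow> 0 < \<psi> r" using pos by blast
  obtain \<beta> where "\<beta> < 1" and "almost_decreasing (\<lambda>r. \<psi> r / r powr \<beta>)"
    using exists_almost_decreasing_exponent_lt_1[of \<psi>] one idx by auto
  then obtain K where "1 \<le> K"
    and K: "\<And>r R. 0 < r \<Longrightarrow> r \<le> R \<Longrightarrow> R \<le> 1 \<Longrightarrow> \<psi> R / R powr \<beta> \<le> K * (\<psi> r / r powr \<beta>)"
    unfolding almost_decreasing_def by blast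
  define C where "C = K * (4 + 1 / (1 - 2 powr \<beta> / 2))"
  have "0 < C" using half_two_powr_lt_1[OF \<open>\<beta> < 1\<close>] \<open>1 \<le> K\<close> unfolding C_def by (simp add: add_pos_pos)
  moreover have "holder_semi \<psi> f \<le> ereal C * (C0_norm f + holder_semi2 \<psi> f)" for f :: "'a \<Rightarrow> real"
  proof (rule holder_semi_le_C0_norm_plus_holder_semi2[OF pos \<open>0 < C\<close>])
    fix D S x and h :: 'a
    assume "\<And>y. \<bar>f y\<bar> \<le> D" "\<And>x h. 0 < norm h \<Longrightarrow> norm h \<le> 1 \<Longrightarrow>
        \<bar>f (x + h) - 2 * f x + f (x - h)\<bar> \<le> S * \<psi> (norm h)" "0 \<le> S" "0 < norm h" "norm h \<le> 1"
    from abs_increment_bound[OF pos one \<open>\<beta> < 1\<close> K this]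
    show "\<bar>f (x + h) - f x\<bar> \<le> C * (D + S) * \<psi> (norm h)" unfolding C_def .
  qed
  ultimately show ?thesis by blast
qed

end
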